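(* The Minimax SCC $M$ coincides with the Borda SCC $Bor$ (as functions on $\mathcal P$) if and only if $n=2$.
   Context: Let $n,h\ge2$, $N=\{1,\dots,n\}$, $H=\{1,\dots,h\}$; $\mathcal P$ is the set of $h$-tuples $p$ of linear orders on $N$; $x>_{p_i}y$ means $x\neq y$ and $p_i$ ranks $x$ above $y$; $\mathrm{rank}_{p_i}(x)=|\{y: y>_{p_i}x\}|+1$. $M(p)=\mathrm{argmin}_{x\in N}\max_{y\neq x}|\{i: y>_{p_i}x\}|$ and $Bor(p)=\mathrm{argmax}_{x\in N}\sum_{i=1}^h(n-\mathrm{rank}_{p_i}(x))$. *)

theory Defs
  imports Main
begin

text \<open>A preference p_i is a linear order on N,
 represented as a relation r with (x,y) in r meaning "x is ranked weakly above y".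
 A profile is a function p from voters to such relations; only its values on H matter.\<close>

definition is_profile :: "nat \<Rightarrow> nat \<Rightarrow> (nat \<Rightarrow> nat rel) \<Rightarrow> bool" where
  "is_profile n h p \<longleftrightarrow> (\<forall>i\<in>{1..h}. linear_order_on {1..n} (p i))"

definition pref :: "nat rel \<Rightarrow> nat \<Rightarrow> nat \<Rightarrow> bool" where
  "pref r x y \<longleftrightarrow> x \<noteq> y \<and> (x, y) \<in> r"

definition rank :: "nat \<Rightarrow> nat rel \<Rightarrow> nat \<Rightarrow> nat" where
  "rank n r x = card {y \<in> {1..n}. pref r y x} + 1"

definition minimax_score :: "nat \<Rightarrow> nat \<Rightarrow> (nat \<Rightarrow> nat rel) \<Rightarrow> nat \<Rightarrow> nat" where
  "minimax_score n h p x = Max {card {i \<in> {1..h}. pref (p i) y x} | y. y \<in> {1..n} \<and> y \<noteq> x}"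

definition Minimax :: "nat \<Rightarrow> nat \<Rightarrow> (nat \<Rightarrow> nat rel) \<Rightarrow> nat set" where
  "Minimax n h p = {x \<in> {1..n}. \<forall>z \<in> {1..n}. minimax_score n h p x \<le> minimax_score n h p z}"

definition borda_score :: "nat \<Rightarrow> nat \<Rightarrow> (nat \<Rightarrow> nat rel) \<Rightarrow> nat \<Rightarrow> nat" where
  "borda_score n h p x = (\<Sum>i = 1..h. n - rank n (p i) x)"

definition Borda :: "nat \<Rightarrow> nat \<Rightarrow> (nat \<Rightarrow> nat rel) \<Rightarrow> nat set" where
  "Borda n h p = {x \<in> {1..n}. \<forall>z \<in> {1..n}. borda_score n h p z \<le> borda_score n h p x}"

end

theory Submission
  imports Defs
begin

text \<open>
  The Borda score of \<open>x\<close> is the sum over all \<open>y\<close> of the number of voters ranking \<open>x\<close>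
  above \<open>y\<close>. With two alternatives there is a single opponent, so the Borda score is \<open>h\<close> minus
  the Minimax score and both rules select the same alternatives.

  For \<open>n \<ge> 3\<close> let the odd voters rank \<open>1 > 2 > \<dots> > n\<close> and the even voters
  \<open>2 > 3 > 1 > 4 > \<dots> > n\<close>. Alternative \<open>1\<close> is beaten only by the even voters, every
  other alternative by all odd voters, so \<open>1\<close> minimises the Minimax score, strictly when \<open>h\<close>
  is odd. Alternative \<open>2\<close>, however, gets a Borda score at least that of \<open>1\<close>, strictly more
  when \<open>h\<close> is even, and is a Borda winner when \<open>h\<close> is odd.
\<close>

lemma pref_neq: "pref r x y \<Longrightarrow> x \<noteq> y"
  by (simp add: pref_def)

lemma pref_asym: "antisym r \<Longrightarrow> pref r x y \<Longrightarrow> \<not> pref r y x"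
  by (auto simp: pref_def antisym_def)

lemma pref_total: "total_on A r \<Longrightarrow> x \<in> A \<Longrightarrow> y \<in> A \<Longrightarrow> x \<noteq> y \<Longrightarrow> pref r x y \<or> pref r y x"
  by (auto simp: pref_def total_on_def)

lemma antisym_total_on_if_linear_order_on:
  "linear_order_on A r \<Longrightarrow> antisym r \<and> total_on A r"
  by (simp add: linear_order_on_def partial_order_on_def)

lemma rank_complement:
  assumes "linear_order_on {1..n} r" and x: "x \<in> {1..n}"
  shows "n - rank n r x = card {y \<in> {1..n}. pref r x y}"
proof -
  let ?above = "{y \<in> {1..n}. pref r y x}" and ?below = "{y \<in> {1..n}. pref r x y}"
  have "antisym r" "total_on {1..n} r"
    using assms antisym_total_on_if_linear_order_on by blast+
  then have "?above \<union> ?below = {1..n} - {x}" and "?above \<inter> ?below = {}"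
    using x pref_neq pref_asym pref_total[of "{1..n}" r x] by blast+
  then have "card ?above + card ?below = card ({1..n} - {x})"
    using card_Un_disjoint[of ?above ?below] by simp
  also have "\<dots> = n - 1"
    using x by simp
  finally show ?thesis
    unfolding rank_def by simp
qed

definition support :: "nat \<Rightarrow> (nat \<Rightarrow> nat rel) \<Rightarrow> nat \<Rightarrow> nat \<Rightarrow> nat" where
  "support h p x y = card {i \<in> {1..h}. pref (p i) x y}"

lemma minimax_score_support:
  "minimax_score n h p x = Max {support h p y x | y. y \<in> {1..n} \<and> y \<noteq> x}"
  by (simp add: minimax_score_def support_def)

lemma support_complement:
  assumes p: "is_profile n h p" and "x \<in> {1..n}" "y \<in> {1..n}" "x \<noteq> y"
  shows "support h p x y + support h p y x = h"
proof -
  let ?X = "{i \<in> {1..h}. pref (p i) x y}" and ?Y = "{i \<in> {1..h}. pref (p i) y x}"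
  have "antisym (p i) \<and> total_on {1..n} (p i)" if "i \<in> {1..h}" for i
    using p that by (intro antisym_total_on_if_linear_order_on) (simp add: is_profile_def)
  then have "?X \<union> ?Y = {1..h}" and "?X \<inter> ?Y = {}"
    using assms(2-4) pref_asym pref_total[of "{1..n}" _ x y] by blast+
  then have "card ?X + card ?Y = card {1..h}"
    using card_Un_disjoint[of ?X ?Y] by simp
  then show ?thesis
    unfolding support_def by simp
qed

lemma borda_score_support:
  assumes p: "is_profile n h p" and x: "x \<in> {1..n}"
  shows "borda_score n h p x = (\<Sum>y = 1..n. support h p x y)"
proof -
  have "borda_score n h p x = (\<Sum>i = 1..h. card {y \<in> {1..n}. pref (p i) x y})"
    unfolding borda_score_def using p x by (intro sum.cong) (auto simp: is_profile_def rank_complement)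
  also have "\<dots> = (\<Sum>i = 1..h. \<Sum>y = 1..n. of_bool (pref (p i) x y))"
    by (simp add: Int_def)
  also have "\<dots> = (\<Sum>y = 1..n. \<Sum>i = 1..h. of_bool (pref (p i) x y))"
    by (rule sum.swap)
  also have "\<dots> = (\<Sum>y = 1..n. support h p x y)"
    by (simp add: support_def Int_def)
  finally show ?thesis .
qed

lemma Minimax_eq_Borda_if_scores_complementary:
  assumes "\<And>x. x \<in> {1..n} \<Longrightarrow> minimax_score n h p x + borda_score n h p x = h"
  shows "Minimax n h p = Borda n h p"
proof -
  have "minimax_score n h p x \<le> minimax_score n h p z \<longleftrightarrow> borda_score n h p z \<le> borda_score n h p x"
    if "x \<in> {1..n}" "z \<in> {1..n}" for x z
    using assms[OF that(1)] assms[OF that(2)] by linarith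
  then show ?thesis
    unfolding Minimax_def Borda_def by blast
qed

lemma Minimax_eq_Borda_two:
  assumes p: "is_profile 2 h p"
  shows "Minimax 2 h p = Borda 2 h p"
proof (rule Minimax_eq_Borda_if_scores_complementary)
  fix x :: nat assume x: "x \<in> {1..2}"
  then have "x = 1 \<or> x = 2" by auto
  then have other: "3 - x \<in> {1..2}" "3 - x \<noteq> x" and "{1..2::nat} = {x, 3 - x}" by auto
  then have "{support h p y x | y. y \<in> {1..2} \<and> y \<noteq> x} = {support h p (3 - x) x}" by auto
  then have "minimax_score 2 h p x = support h p (3 - x) x"
    by (simp add: minimax_score_support)
  moreover have "borda_score 2 h p x = support h p x (3 - x)"
    using borda_score_support[OF p x] \<open>{1..2} = _\<close> other by (simp add: support_def pref_def)
  ultimately show "minimax_score 2 h p x + borda_score 2 h p x = h"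
    using support_complement[OF p x other(1)] other by simp
qed

lemma support_le_minimax_score:
  assumes "y \<in> {1..n}" "y \<noteq> x"
  shows "support h p y x \<le> minimax_score n h p x"
  unfolding minimax_score_support using assms by (intro Max_ge) auto

lemma minimax_score_le:
  assumes "2 \<le> n" "x \<in> {1..n}" and "\<And>y. y \<in> {1..n} \<Longrightarrow> y \<noteq> x \<Longrightarrow> support h p y x \<le> k"
  shows "minimax_score n h p x \<le> k"
proof -
  let ?S = "{support h p y x | y. y \<in> {1..n} \<and> y \<noteq> x}"
  have "(if x = 1 then 2 else 1) \<in> {1..n} - {x}"
    using assms(1,2) by auto
  then have "?S \<noteq> {}"
    by blast
  moreover have "finite ?S"
    by (auto intro: finite_image_set)
  ultimately show ?thesis
    unfolding minimax_score_support using assms(3) by (intro Max.boundedI) auto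
qed

definition key_order :: "nat \<Rightarrow> (nat \<Rightarrow> nat) \<Rightarrow> nat rel" where
  "key_order n f = {(x, y). x \<in> {1..n} \<and> y \<in> {1..n} \<and> f x \<le> f y}"

lemma linear_order_key_order:
  assumes f: "inj_on f {1..n}"
  shows "linear_order_on {1..n} (key_order n f)"
proof -
  have "antisym (key_order n f)"
  proof (rule antisymI)
    fix x y assume "(x, y) \<in> key_order n f" "(y, x) \<in> key_order n f"
    then show "x = y"
      using inj_onD[OF f] by (simp add: key_order_def)
  qed
  moreover have "trans (key_order n f)"
    by (rule transI) (simp add: key_order_def)
  ultimately show ?thesis
    unfolding order_on_defs refl_on_def total_on_def by (auto simp: key_order_def)
qed

lemma pref_key_order:
  assumes "inj_on f {1..n}"
  shows "pref (key_order n f) x y \<longleftrightarrow> x \<in> {1..n} \<and> y \<in> {1..n} \<and> f x < f y"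
  using inj_onD[OF assms, of x y] by (auto simp: pref_def key_order_def order_less_le)

lemma rank_key_order:
  assumes f: "bij_betw f {1..n} {1..n}" and x: "x \<in> {1..n}"
  shows "rank n (key_order n f) x = f x"
proof -
  have inj: "inj_on f {1..n}" and img: "f ` {1..n} = {1..n}"
    using f by (simp_all add: bij_betw_def)
  have fx: "f x \<in> {1..n}"
    using img x by blast
  have above: "{y \<in> {1..n}. pref (key_order n f) y x} = {y \<in> {1..n}. f y < f x}"
    using x pref_key_order[OF inj] by blast
  have "f ` {y \<in> {1..n}. f y < f x} = {k \<in> f ` {1..n}. k < f x}"
    by blast
  also have "\<dots> = {1..<f x}"
    using img fx by auto
  moreover have "inj_on f {y \<in> {1..n}. f y < f x}"
    using inj by (rule inj_on_subset) blast
  ultimately have "card {y \<in> {1..n}. f y < f x} = f x - 1"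
    using card_image by fastforce
  then show ?thesis
    unfolding rank_def above using fx by simp
qed

lemma sum_odd_even:
  "(\<Sum>i = 1..h. if odd i then a else b) = (h + 1) div 2 * a + h div 2 * (b :: nat)"
proof (induction h)
  case (Suc h)
  then show ?case
    by (cases "odd h") (auto elim!: oddE simp: algebra_simps)
qed simp

text \<open>As a key, \<open>cycle3\<close> yields the ballot \<open>2 > 3 > 1 > 4 > \<dots> > n\<close>.\<close>

definition cycle3 :: "nat \<Rightarrow> nat" where
  "cycle3 x = (if x = 1 then 3 else if x = 2 then 1 else if x = 3 then 2 else x)"

lemma bij_betw_cycle3: "3 \<le> n \<Longrightarrow> bij_betw cycle3 {1..n} {1..n}"
  by (rule bij_betw_byWitness[where f' = "cycle3 \<circ> cycle3"]) (auto simp: cycle3_def)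

definition alternating_profile :: "nat \<Rightarrow> nat \<Rightarrow> nat rel" where
  "alternating_profile n i = key_order n (if odd i then id else cycle3)"

lemma is_profile_alternating_profile:
  assumes "3 \<le> n"
  shows "is_profile n h (alternating_profile n)"
proof -
  have "inj_on cycle3 {1..n}"
    using bij_betw_cycle3[OF assms] by (rule bij_betw_imp_inj_on)
  then show ?thesis
    unfolding is_profile_def alternating_profile_def
    using linear_order_key_order[of cycle3] linear_order_key_order[OF inj_on_id] by simp
qed

lemma support_alternating_profile:
  assumes n: "3 \<le> n" and xy: "x \<in> {1..n}" "y \<in> {1..n}"
  shows "support h (alternating_profile n) x y =
    (h + 1) div 2 * of_bool (x < y) + h div 2 * of_bool (cycle3 x < cycle3 y)"
proof -
  have inj: "inj_on cycle3 {1..n}"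
    using bij_betw_cycle3[OF n] by (rule bij_betw_imp_inj_on)
  have "support h (alternating_profile n) x y = (\<Sum>i = 1..h. of_bool (pref (alternating_profile n i) x y))"
    by (simp add: support_def Int_def)
  also have "\<dots> = (\<Sum>i = 1..h. if odd i then of_bool (x < y) else of_bool (cycle3 x < cycle3 y))"
    unfolding alternating_profile_def
    using xy pref_key_order[OF inj] pref_key_order[of id n] by (intro sum.cong) auto
  finally show ?thesis
    by (simp only: sum_odd_even)
qed

lemma borda_score_alternating_profile:
  assumes n: "3 \<le> n" and x: "x \<in> {1..n}"
  shows "borda_score n h (alternating_profile n) x = (h + 1) div 2 * (n - x) + h div 2 * (n - cycle3 x)"
proof -
  have "borda_score n h (alternating_profile n) x = (\<Sum>i = 1..h. if odd i then n - x else n - cycle3 x)"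
    unfolding borda_score_def alternating_profile_def
    using rank_key_order[OF bij_betw_cycle3[OF n] x] rank_key_order[OF bij_betw_id x]
    by (intro sum.cong) auto
  then show ?thesis
    by (simp only: sum_odd_even)
qed

lemma minimax_score_alternating_profile_1:
  assumes n: "3 \<le> n"
  shows "minimax_score n h (alternating_profile n) 1 \<le> h div 2"
proof (rule minimax_score_le)
  fix y assume "y \<in> {1..n}" "y \<noteq> 1"
  then show "support h (alternating_profile n) y 1 \<le> h div 2"
    using n by (simp add: support_alternating_profile)
qed (use n in auto)

lemma minimax_score_alternating_profile_ge:
  assumes n: "3 \<le> n" and z: "z \<in> {1..n}" "z \<noteq> 1"
  shows "(h + 1) div 2 \<le> minimax_score n h (alternating_profile n) z"
proof -
  define y where "y = (if z = 3 then 2 else 1 :: nat)"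
  have y: "y \<in> {1..n}" "y \<noteq> z" "y < z"
    using n z by (auto simp: y_def)
  then have "(h + 1) div 2 \<le> support h (alternating_profile n) y z"
    using n z by (simp add: support_alternating_profile)
  also have "\<dots> \<le> minimax_score n h (alternating_profile n) z"
    using y by (intro support_le_minimax_score)
  finally show ?thesis .
qed

lemma alternating_profile_even:
  assumes n: "3 \<le> n" and h: "even h" "2 \<le> h"
  shows "1 \<in> Minimax n h (alternating_profile n)" "1 \<notin> Borda n h (alternating_profile n)"
proof -
  let ?p = "alternating_profile n"
  obtain e where e: "h = 2 * e" "1 \<le> e"
    using h by (auto elim!: evenE)
  have "minimax_score n h ?p 1 \<le> minimax_score n h ?p z" if "z \<in> {1..n}" for z
  proof (cases "z = 1")
    case False
    then show ?thesis
      using minimax_score_alternating_profile_1[OF n, of h]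
        minimax_score_alternating_profile_ge[OF n that False, of h] e by simp
  qed simp
  then show "1 \<in> Minimax n h ?p"
    using n by (simp add: Minimax_def)
  have "borda_score n h ?p 1 = e * (n - 1) + e * (n - 3)"
    and "borda_score n h ?p 2 = e * (n - 1) + e * (n - 2)"
    using n e by (simp_all add: borda_score_alternating_profile cycle3_def)
  moreover have "e * (n - 3) < e * (n - 2)"
    using n e by simp
  ultimately have "borda_score n h ?p 1 < borda_score n h ?p 2"
    by simp
  moreover have "2 \<in> {1..n}"
    using n by simp
  ultimately show "1 \<notin> Borda n h ?p"
    unfolding Borda_def by (blast dest: leD)
qed

lemma alternating_profile_odd:
  assumes n: "3 \<le> n" and h: "odd h" "2 \<le> h"
  shows "2 \<notin> Minimax n h (alternating_profile n)" "2 \<in> Borda n h (alternating_profile n)"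
proof -
  let ?p = "alternating_profile n"
  obtain e where e: "h = 2 * e + 1" "1 \<le> e"
    using h by (auto elim!: oddE)
  have "minimax_score n h ?p 1 < minimax_score n h ?p 2"
    using minimax_score_alternating_profile_1[OF n, of h]
      minimax_score_alternating_profile_ge[OF n, of 2 h] n e by auto
  moreover have "1 \<in> {1..n}"
    using n by simp
  ultimately show "2 \<notin> Minimax n h ?p"
    unfolding Minimax_def by (blast dest: leD)
  have "borda_score n h ?p z \<le> borda_score n h ?p 2" if z: "z \<in> {1..n}" for z
  proof -
    consider "z = 1" | "z = 2" | "z = 3" | "4 \<le> z"
      using z by force
    then have "(e + 1) * (n - z) + e * (n - cycle3 z) \<le> (e + 1) * (n - 2) + e * (n - 1)"
    proof cases
      case 4
      then have "n - z \<le> n - 2" "n - z \<le> n - 1" "cycle3 z = z"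
        by (auto simp: cycle3_def)
      then show ?thesis
        by (metis add_mono mult_le_mono2)
    qed (use n e in \<open>auto simp: cycle3_def algebra_simps\<close>)
    then show ?thesis
      using n z e by (simp add: borda_score_alternating_profile cycle3_def)
  qed
  then show "2 \<in> Borda n h ?p"
    using n by (simp add: Borda_def)
qed

lemma Minimax_ne_Borda_alternating_profile:
  assumes "3 \<le> n" "2 \<le> h"
  shows "Minimax n h (alternating_profile n) \<noteq> Borda n h (alternating_profile n)"
  using alternating_profile_even[OF assms(1) _ assms(2)] alternating_profile_odd[OF assms(1) _ assms(2)]
  by (cases "even h") auto

theorem corollary1:
  fixes n h :: nat
  assumes "n \<ge> 2" and "h \<ge> 2"
  shows "(\<forall>p. is_profile n h p \<longrightarrow> Minimax n h p = Borda n h p) \<longleftrightarrow> n = 2"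
proof
  assume coincide: "\<forall>p. is_profile n h p \<longrightarrow> Minimax n h p = Borda n h p"
  show "n = 2"
  proof (rule ccontr)
    assume "n \<noteq> 2"
    with assms(1) have "3 \<le> n"
      by simp
    then show False
      using coincide is_profile_alternating_profile Minimax_ne_Borda_alternating_profile assms(2)
      by blast
  qed
next
  assume "n = 2"
  then show "\<forall>p. is_profile n h p \<longrightarrow> Minimax n h p = Borda n h p"
    using Minimax_eq_Borda_two by simp
qed

end
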